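(* Let $A\subset\mathbb{R}^n$ be a set-germ at $0$ with $0\in\overline{A}$, and let $h:(\mathbb{R}^n,0)\to(\mathbb{R}^n,0)$ be a bi-Lipschitz homeomorphism (germ). Then $D(h(A))\subset D(h(LD(A)))$. Moreover, if $A$ satisfies condition $(SSP)$, then $D(h(A))=D(h(LD(A)))$.
   Context: A bi-Lipschitz homeomorphism germ is a homeomorphism between neighbourhoods of $0$ fixing $0$ with $K_1|x-y|\le|h(x)-h(y)|\le K_2|x-y|$ for some $0<K_1\le K_2$ near $0$. Direction set: $D(X)=\{a\in S^{n-1} : \exists\, \{x_i\}\subset X\setminus\{0\},\ x_i\to 0,\ x_i/\|x_i\|\to a\}$; $LD(A)=\{ta : a\in D(A),\ t\ge0\}$. A set-germ $X$ with $0\in\overline{X}$ satisfies condition $(SSP)$ if for every sequence $\{a_m\}\subset\mathbb{R}^n$ with $a_m\to0$ and $\lim a_m/\|a_m\|\in D(X)$ there is a sequence $\{b_m\}\subset X$ with $\|a_m-b_m\|/\|a_m\|\to0$ and $\|a_m-b_m\|/\|b_m\|\to0$. *)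

theory Defs
  imports "HOL-Analysis.Analysis"
begin

definition dirset :: "'a::euclidean_space set \<Rightarrow> 'a set" where
  "dirset X = {a. norm a = 1 \<and> (\<exists>x::nat \<Rightarrow> 'a. (\<forall>i. x i \<in> X - {0}) \<and>
      x \<longlonglongrightarrow> 0 \<and> (\<lambda>i. x i /\<^sub>R norm (x i)) \<longlonglongrightarrow> a)}"

definition LD :: "'a::euclidean_space set \<Rightarrow> 'a set" where
  "LD A = {t *\<^sub>R a | t a. a \<in> dirset A \<and> t \<ge> 0}"

text \<open>h restricted to the open neighbourhood U of 0 is a bi-Lipschitz homeomorphism
  onto an open neighbourhood of 0, fixing 0 (a representative of a bi-Lipschitz
  homeomorphism germ).\<close>
definition bilip_homeo_germ :: "'a::euclidean_space set \<Rightarrow> ('a \<Rightarrow> 'a) \<Rightarrow> bool" where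
  "bilip_homeo_germ U h \<longleftrightarrow> open U \<and> 0 \<in> U \<and> h 0 = 0 \<and> open (h ` U) \<and>
     (\<exists>g. homeomorphism U (h ` U) h g) \<and>
     (\<exists>K1 K2. 0 < K1 \<and> K1 \<le> K2 \<and>
        (\<forall>x\<in>U. \<forall>y\<in>U. K1 * norm (x - y) \<le> norm (h x - h y) \<and>
                          norm (h x - h y) \<le> K2 * norm (x - y)))"

definition SSP :: "'a::euclidean_space set \<Rightarrow> bool" where
  "SSP X \<longleftrightarrow> (\<forall>a::nat \<Rightarrow> 'a. a \<longlonglongrightarrow> 0 \<and>
       (\<exists>l\<in>dirset X. (\<lambda>m. a m /\<^sub>R norm (a m)) \<longlonglongrightarrow> l) \<longrightarrow>
       (\<exists>b::nat \<Rightarrow> 'a. (\<forall>m. b m \<in> X) \<and>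
          (\<lambda>m. norm (a m - b m) / norm (a m)) \<longlonglongrightarrow> 0 \<and>
          (\<lambda>m. norm (a m - b m) / norm (b m)) \<longlonglongrightarrow> 0))"

end

(* A bi-Lipschitz germ h with h 0 = 0 preserves relative closeness: if |x_i - w_i| = o(|x_i|)
   then |h x_i - h w_i| = o(|h x_i|), and relatively close sequences have the same limiting
   directions. A sequence x_i in A tending to 0 is, along a subsequence whose directions converge
   to some d in D(A), relatively close to the points |x_i| d of LD(A). Conversely, the directions
   of points z_i of LD(A) lie in the compact set D(A), so along a subsequence they converge in
   D(A), and then (SSP) provides points of A relatively close to the z_i. *)

theory Submission
  imports Defs
begin

lemma norm_direction_diff_le:
  fixes u v :: "'a::real_normed_vector"
  assumes "v \<noteq> 0"
  shows "norm (u /\<^sub>R norm u - v /\<^sub>R norm v) \<le> 2 * (norm (v - u) / norm v)"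
proof (cases "u = 0")
  case True
  with assms show ?thesis by simp
next
  case False
  have "u /\<^sub>R norm u - v /\<^sub>R norm v = (u - v) /\<^sub>R norm v + (1 / norm u - 1 / norm v) *\<^sub>R u"
    by (simp add: scaleR_diff_left scaleR_diff_right inverse_eq_divide)
  then have "norm (u /\<^sub>R norm u - v /\<^sub>R norm v)
      \<le> norm ((u - v) /\<^sub>R norm v) + norm ((1 / norm u - 1 / norm v) *\<^sub>R u)"
    by (metis norm_triangle_ineq)
  also have "\<dots> = norm (u - v) / norm v + \<bar>1 / norm u - 1 / norm v\<bar> * norm u"
    by (simp add: divide_inverse_commute)
  also have "\<bar>1 / norm u - 1 / norm v\<bar> * norm u = \<bar>norm v - norm u\<bar> / norm v"
    using False assms by (simp add: field_simps abs_div)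
  also have "\<bar>norm v - norm u\<bar> \<le> norm (v - u)"
    by (rule norm_triangle_ineq3)
  finally show ?thesis
    using assms by (simp add: norm_minus_commute divide_right_mono add_divide_distrib[symmetric])
qed

lemma eventually_nonzero_relative_error:
  fixes x w :: "nat \<Rightarrow> 'a::real_normed_vector"
  assumes "\<forall>\<^sub>F i in sequentially. x i \<noteq> 0"
    and "(\<lambda>i. norm (x i - w i) / norm (x i)) \<longlonglongrightarrow> 0"
  shows "\<forall>\<^sub>F i in sequentially. w i \<noteq> 0"
proof -
  have "\<forall>\<^sub>F i in sequentially. norm (x i - w i) / norm (x i) < 1"
    using assms(2) by (rule order_tendstoD) simp
  with assms(1) show ?thesis
    by eventually_elim auto
qed

lemma tendsto_zero_relative_error:
  fixes x w :: "nat \<Rightarrow> 'a::real_normed_vector"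
  assumes "\<forall>\<^sub>F i in sequentially. x i \<noteq> 0" and "x \<longlonglongrightarrow> 0"
    and "(\<lambda>i. norm (x i - w i) / norm (x i)) \<longlonglongrightarrow> 0"
  shows "w \<longlonglongrightarrow> 0"
proof (rule Lim_null_comparison)
  show "\<forall>\<^sub>F i in sequentially.
      norm (w i) \<le> norm (x i) + norm (x i - w i) / norm (x i) * norm (x i)"
    using assms(1)
  proof eventually_elim
    case (elim i)
    then show ?case
      using norm_triangle_sub[of "w i" "x i"] by (simp add: norm_minus_commute)
  qed
  have "(\<lambda>i. norm (x i)) \<longlonglongrightarrow> 0"
    using assms(2) by (rule tendsto_norm_zero)
  then show "(\<lambda>i. norm (x i) + norm (x i - w i) / norm (x i) * norm (x i)) \<longlonglongrightarrow> 0"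
    using tendsto_add_zero tendsto_mult_zero[OF assms(3)] by blast
qed

lemma direction_tendsto_relative_error:
  fixes x w :: "nat \<Rightarrow> 'a::real_normed_vector"
  assumes "\<forall>\<^sub>F i in sequentially. x i \<noteq> 0"
    and "(\<lambda>i. norm (x i - w i) / norm (x i)) \<longlonglongrightarrow> 0"
    and "(\<lambda>i. x i /\<^sub>R norm (x i)) \<longlonglongrightarrow> a"
  shows "(\<lambda>i. w i /\<^sub>R norm (w i)) \<longlonglongrightarrow> a"
proof -
  have "(\<lambda>i. w i /\<^sub>R norm (w i) - x i /\<^sub>R norm (x i)) \<longlonglongrightarrow> 0"
  proof (rule Lim_null_comparison)
    show "\<forall>\<^sub>F i in sequentially.
        norm (w i /\<^sub>R norm (w i) - x i /\<^sub>R norm (x i)) \<le> 2 * (norm (x i - w i) / norm (x i))"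
      using assms(1) by eventually_elim (rule norm_direction_diff_le)
    show "(\<lambda>i. 2 * (norm (x i - w i) / norm (x i))) \<longlonglongrightarrow> 0"
      using tendsto_mult_right_zero[OF assms(2)] .
  qed
  from tendsto_add[OF this assms(3)] show ?thesis
    by simp
qed

lemma norm_dirset: "a \<in> dirset X \<Longrightarrow> norm a = 1"
  by (simp add: dirset_def)

lemma dirset_subset_sphere: "dirset X \<subseteq> sphere 0 1"
  by (auto simp: norm_dirset)

lemma dirset_iff:
  "a \<in> dirset X \<longleftrightarrow> norm a = 1 \<and>
     (\<forall>e>0. \<exists>x\<in>X - {0}. norm x < e \<and> norm (x /\<^sub>R norm x - a) < e)"
proof
  assume "a \<in> dirset X"
  then obtain x where "norm a = 1" and x: "\<And>i. x i \<in> X - {0}" "x \<longlonglongrightarrow> 0"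
      "(\<lambda>i. x i /\<^sub>R norm (x i)) \<longlonglongrightarrow> a"
    unfolding dirset_def by blast
  moreover have "\<exists>y\<in>X - {0}. norm y < e \<and> norm (y /\<^sub>R norm y - a) < e" if "e > 0" for e
  proof -
    have "\<forall>\<^sub>F i in sequentially. norm (x i) < e"
      using order_tendstoD(2)[OF tendsto_norm_zero[OF x(2)] that] .
    moreover have "\<forall>\<^sub>F i in sequentially. norm (x i /\<^sub>R norm (x i) - a) < e"
      using order_tendstoD(2)[OF tendsto_norm_zero[OF LIM_zero[OF x(3)]] that] .
    ultimately have "\<forall>\<^sub>F i in sequentially. norm (x i) < e \<and> norm (x i /\<^sub>R norm (x i) - a) < e"
      by (rule eventually_conj)
    then obtain i where "norm (x i) < e \<and> norm (x i /\<^sub>R norm (x i) - a) < e"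
      using eventually_happens'[OF sequentially_bot] by blast
    with x(1) show ?thesis by blast
  qed
  ultimately show "norm a = 1 \<and> (\<forall>e>0. \<exists>x\<in>X - {0}. norm x < e \<and> norm (x /\<^sub>R norm x - a) < e)"
    by blast
next
  assume H: "norm a = 1 \<and> (\<forall>e>0. \<exists>x\<in>X - {0}. norm x < e \<and> norm (x /\<^sub>R norm x - a) < e)"
  then have "\<forall>n. \<exists>x\<in>X - {0}. norm x < 1 / Suc n \<and> norm (x /\<^sub>R norm x - a) < 1 / Suc n"
    by simp
  then obtain x where x: "\<And>n. x n \<in> X - {0}" "\<And>n. norm (x n) < 1 / Suc n"
      "\<And>n. norm (x n /\<^sub>R norm (x n) - a) < 1 / Suc n"
    by metis
  have "x \<longlonglongrightarrow> 0"
    using LIMSEQ_norm_0 x(2) by blast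
  moreover have "(\<lambda>n. x n /\<^sub>R norm (x n) - a) \<longlonglongrightarrow> 0"
    by (rule LIMSEQ_norm_0) (rule x(3))
  then have "(\<lambda>n. x n /\<^sub>R norm (x n)) \<longlonglongrightarrow> a"
    using Lim_null by blast
  ultimately show "a \<in> dirset X"
    unfolding dirset_def using H x(1) by blast
qed

lemma closed_dirset: "closed (dirset X)"
  unfolding closed_sequential_limits
proof (intro allI impI, elim conjE)
  fix d and l :: 'a
  assume d: "\<forall>n. d n \<in> dirset X" and l: "d \<longlonglongrightarrow> l"
  have "l \<in> sphere 0 1"
    using d norm_dirset by (intro closed_sequentially[OF closed_sphere _ l]) auto
  moreover have "\<exists>x\<in>X - {0}. norm x < e \<and> norm (x /\<^sub>R norm x - l) < e" if "e > 0" for e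
  proof -
    obtain n where n: "norm (d n - l) < e / 2"
      using LIMSEQ_D[OF l, of "e / 2"] \<open>e > 0\<close> by auto
    obtain x where x: "x \<in> X - {0}" "norm x < e / 2" "norm (x /\<^sub>R norm x - d n) < e / 2"
      using d \<open>e > 0\<close> unfolding dirset_iff by (meson half_gt_zero)
    have "norm (x /\<^sub>R norm x - l) \<le> norm (x /\<^sub>R norm x - d n) + norm (d n - l)"
      by (rule norm_diff_triangle_le) auto
    with n x(2,3) \<open>e > 0\<close> have "norm x < e" "norm (x /\<^sub>R norm x - l) < e"
      by linarith+
    with x(1) show ?thesis
      by blast
  qed
  ultimately show "l \<in> dirset X"
    unfolding dirset_iff by simp
qed

lemma compact_dirset: "compact (dirset X)"
  unfolding compact_eq_bounded_closed
  using closed_dirset bounded_subset[OF bounded_sphere dirset_subset_sphere] by blast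

lemma dirsetI_eventually:
  assumes "norm a = 1" and "\<forall>\<^sub>F i in sequentially. x i \<in> X - {0}" and "x \<longlonglongrightarrow> 0"
    and "(\<lambda>i. x i /\<^sub>R norm (x i)) \<longlonglongrightarrow> a"
  shows "a \<in> dirset X"
proof -
  obtain N where "\<And>i. x (i + N) \<in> X - {0}"
    using assms(2) unfolding eventually_sequentially by (metis le_add2)
  then show ?thesis
    unfolding dirset_def
    using assms(1) LIMSEQ_ignore_initial_segment[OF assms(3)]
      LIMSEQ_ignore_initial_segment[OF assms(4)]
    by (intro CollectI conjI exI[of _ "\<lambda>i. x (i + N)"]) auto
qed

lemma LD_direction:
  assumes "z \<in> LD A" and "z \<noteq> 0"
  shows "z /\<^sub>R norm z \<in> dirset A"
proof -
  obtain t d where z: "z = t *\<^sub>R d" and d: "d \<in> dirset A" and "t \<ge> 0"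
    using assms(1) unfolding LD_def by blast
  with assms(2) have "t > 0"
    by (metis less_eq_real_def scale_zero_left)
  moreover have "norm d = 1"
    using d by (rule norm_dirset)
  ultimately show ?thesis
    using z d by simp
qed

locale bilipschitz_germ =
  fixes U :: "'a::euclidean_space set" and h :: "'a \<Rightarrow> 'a" and K1 K2 :: real
  assumes open_U: "open U" and zero_in_U: "0 \<in> U" and h_zero: "h 0 = 0" and K1_pos: "0 < K1"
    and lower_lipschitz: "\<lbrakk>x \<in> U; y \<in> U\<rbrakk> \<Longrightarrow> K1 * norm (x - y) \<le> norm (h x - h y)"
    and upper_lipschitz: "\<lbrakk>x \<in> U; y \<in> U\<rbrakk> \<Longrightarrow> norm (h x - h y) \<le> K2 * norm (x - y)"
begin

lemma norm_image_lower: "x \<in> U \<Longrightarrow> K1 * norm x \<le> norm (h x)"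
  using lower_lipschitz[OF _ zero_in_U] h_zero by simp

lemma image_nonzero: "x \<in> U \<Longrightarrow> x \<noteq> 0 \<Longrightarrow> h x \<noteq> 0"
  using norm_image_lower[of x] K1_pos by (auto simp: mult_le_0_iff)

lemma relative_error_image_le:
  assumes "x \<in> U" "w \<in> U" "x \<noteq> 0"
  shows "norm (h x - h w) / norm (h x) \<le> K2 / K1 * (norm (x - w) / norm x)"
proof -
  have "norm (h x - h w) / norm (h x) \<le> K2 * norm (x - w) / (K1 * norm x)"
  proof (rule frac_le)
    show "norm (h x - h w) \<le> K2 * norm (x - w)"
      using assms(1,2) by (rule upper_lipschitz)
    then show "0 \<le> K2 * norm (x - w)"
      using norm_ge_zero order_trans by blast
    show "0 < K1 * norm x"
      using K1_pos assms(3) by simp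
    show "K1 * norm x \<le> norm (h x)"
      using assms(1) by (rule norm_image_lower)
  qed
  then show ?thesis
    by simp
qed

lemma relative_error_image_tendsto_zero:
  assumes "\<forall>\<^sub>F i in sequentially. x i \<in> U - {0}" and "\<forall>\<^sub>F i in sequentially. w i \<in> U"
    and "(\<lambda>i. norm (x i - w i) / norm (x i)) \<longlonglongrightarrow> 0"
  shows "(\<lambda>i. norm (h (x i) - h (w i)) / norm (h (x i))) \<longlonglongrightarrow> 0"
proof (rule Lim_null_comparison)
  show "\<forall>\<^sub>F i in sequentially.
      norm (norm (h (x i) - h (w i)) / norm (h (x i))) \<le> K2 / K1 * (norm (x i - w i) / norm (x i))"
    using assms(1,2)
  proof eventually_elim
    case (elim i)
    then show ?case
      using relative_error_image_le[of "x i" "w i"] by simp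
  qed
  show "(\<lambda>i. K2 / K1 * (norm (x i - w i) / norm (x i))) \<longlonglongrightarrow> 0"
    using tendsto_mult_right_zero[OF assms(3)] .
qed

lemma dirset_imageE:
  assumes "a \<in> dirset (h ` (S \<inter> U))"
  obtains x where "\<forall>i. x i \<in> S \<inter> U - {0}" and "x \<longlonglongrightarrow> 0" and "(\<lambda>i. h (x i)) \<longlonglongrightarrow> 0"
    and "(\<lambda>i. h (x i) /\<^sub>R norm (h (x i))) \<longlonglongrightarrow> a"
proof -
  obtain y where y: "\<forall>i. y i \<in> h ` (S \<inter> U) - {0}" "y \<longlonglongrightarrow> 0"
      "(\<lambda>i. y i /\<^sub>R norm (y i)) \<longlonglongrightarrow> a"
    using assms unfolding dirset_def by blast
  then have "\<forall>i. \<exists>x. x \<in> S \<inter> U - {0} \<and> y i = h x"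
    using h_zero by fastforce
  then obtain x where x: "\<And>i. x i \<in> S \<inter> U - {0}" "\<And>i. y i = h (x i)"
    by metis
  have "x \<longlonglongrightarrow> 0"
  proof (rule Lim_null_comparison)
    show "\<forall>\<^sub>F i in sequentially. norm (x i) \<le> norm (y i) / K1"
      using norm_image_lower x K1_pos by (simp add: field_simps)
    show "(\<lambda>i. norm (y i) / K1) \<longlonglongrightarrow> 0"
      using tendsto_divide_zero[OF tendsto_norm_zero[OF y(2)]] .
  qed
  moreover have "y = (\<lambda>i. h (x i))"
    using x(2) by blast
  ultimately show ?thesis
    using that[of x] x(1) y(2,3) by blast
qed

lemma dirset_imageI:
  assumes "norm a = 1" and x: "\<forall>i. x i \<in> U - {0}" "x \<longlonglongrightarrow> 0" "(\<lambda>i. h (x i)) \<longlonglongrightarrow> 0"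
    "(\<lambda>i. h (x i) /\<^sub>R norm (h (x i))) \<longlonglongrightarrow> a"
    and w: "\<forall>\<^sub>F i in sequentially. w i \<in> S"
    and close: "(\<lambda>i. norm (x i - w i) / norm (x i)) \<longlonglongrightarrow> 0"
  shows "a \<in> dirset (h ` (S \<inter> U))"
proof (rule dirsetI_eventually)
  have x_nonzero: "\<forall>\<^sub>F i in sequentially. x i \<noteq> 0"
    using x(1) by simp
  have "w \<longlonglongrightarrow> 0"
    using x_nonzero x(2) close by (rule tendsto_zero_relative_error)
  then have w_U: "\<forall>\<^sub>F i in sequentially. w i \<in> U"
    using open_U zero_in_U by (rule topological_tendstoD)
  have "\<forall>\<^sub>F i in sequentially. w i \<noteq> 0"
    using x_nonzero close by (rule eventually_nonzero_relative_error)
  with w w_U show "\<forall>\<^sub>F i in sequentially. h (w i) \<in> h ` (S \<inter> U) - {0}"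
    by eventually_elim (auto simp: image_nonzero)
  have hx_nonzero: "\<forall>\<^sub>F i in sequentially. h (x i) \<noteq> 0"
    using x(1) by (simp add: image_nonzero)
  have "(\<lambda>i. norm (h (x i) - h (w i)) / norm (h (x i))) \<longlonglongrightarrow> 0"
    using x(1) w_U close by (intro relative_error_image_tendsto_zero) simp_all
  with hx_nonzero x(3,4) show "(\<lambda>i. h (w i)) \<longlonglongrightarrow> 0"
    and "(\<lambda>i. h (w i) /\<^sub>R norm (h (w i))) \<longlonglongrightarrow> a"
    by (auto intro: tendsto_zero_relative_error direction_tendsto_relative_error)
qed (fact \<open>norm a = 1\<close>)

lemma dirset_image_subset_image_LD: "dirset (h ` (A \<inter> U)) \<subseteq> dirset (h ` (LD A \<inter> U))"
proof
  fix a
  assume "a \<in> dirset (h ` (A \<inter> U))"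
  then obtain x where x: "\<forall>i. x i \<in> A \<inter> U - {0}" "x \<longlonglongrightarrow> 0" "(\<lambda>i. h (x i)) \<longlonglongrightarrow> 0"
      "(\<lambda>i. h (x i) /\<^sub>R norm (h (x i))) \<longlonglongrightarrow> a"
    by (rule dirset_imageE)
  have "\<forall>i. x i /\<^sub>R norm (x i) \<in> sphere 0 1"
    using x(1) by simp
  then obtain d r where "d \<in> sphere 0 1" and r: "strict_mono r"
    and "((\<lambda>i. x i /\<^sub>R norm (x i)) \<circ> r) \<longlonglongrightarrow> d"
    by (rule seq_compactE[OF compact_imp_seq_compact[OF compact_sphere]])
  then have dir_d: "(\<lambda>i. x (r i) /\<^sub>R norm (x (r i))) \<longlonglongrightarrow> d"
    by (simp add: comp_def)
  with \<open>d \<in> sphere 0 1\<close> have d: "d \<in> dirset A"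
    using x(1) LIMSEQ_subseq_LIMSEQ[OF x(2) r]
    unfolding dirset_def by (intro CollectI conjI exI[of _ "x \<circ> r"]) auto
  define w where "w i = norm (x (r i)) *\<^sub>R d" for i
  have "w i \<in> LD A" for i
    unfolding LD_def w_def using d norm_ge_zero by blast
  moreover have "(\<lambda>i. norm (x (r i) - w i) / norm (x (r i))) \<longlonglongrightarrow> 0"
  proof -
    have "norm (x (r i) - w i) / norm (x (r i)) = norm (x (r i) /\<^sub>R norm (x (r i)) - d)" for i
    proof -
      have "x (r i) - w i = norm (x (r i)) *\<^sub>R (x (r i) /\<^sub>R norm (x (r i)) - d)"
        using x(1) by (simp add: w_def scaleR_diff_right)
      then show ?thesis
        using x(1) by simp
    qed
    then show ?thesis
      using tendsto_norm_zero[OF LIM_zero[OF dir_d]] by simp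
  qed
  ultimately show "a \<in> dirset (h ` (LD A \<inter> U))"
    using x(1) LIMSEQ_subseq_LIMSEQ[OF x(2) r] LIMSEQ_subseq_LIMSEQ[OF x(3) r]
      LIMSEQ_subseq_LIMSEQ[OF x(4) r] norm_dirset[OF \<open>a \<in> dirset _\<close>]
    by (intro dirset_imageI[where x = "x \<circ> r" and w = w]) (auto simp: comp_def)
qed

lemma dirset_image_LD_subset_image:
  assumes "SSP A"
  shows "dirset (h ` (LD A \<inter> U)) \<subseteq> dirset (h ` (A \<inter> U))"
proof
  fix a
  assume "a \<in> dirset (h ` (LD A \<inter> U))"
  then obtain z where z: "\<forall>i. z i \<in> LD A \<inter> U - {0}" "z \<longlonglongrightarrow> 0" "(\<lambda>i. h (z i)) \<longlonglongrightarrow> 0"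
      "(\<lambda>i. h (z i) /\<^sub>R norm (h (z i))) \<longlonglongrightarrow> a"
    by (rule dirset_imageE)
  have "\<forall>i. z i /\<^sub>R norm (z i) \<in> dirset A"
    using z(1) LD_direction by blast
  then obtain d r where "d \<in> dirset A" and r: "strict_mono r"
    and "((\<lambda>i. z i /\<^sub>R norm (z i)) \<circ> r) \<longlonglongrightarrow> d"
    by (rule seq_compactE[OF compact_imp_seq_compact[OF compact_dirset]])
  moreover have "(z \<circ> r) \<longlonglongrightarrow> 0"
    using LIMSEQ_subseq_LIMSEQ[OF z(2) r] .
  moreover note assms[unfolded SSP_def, rule_format, of "z \<circ> r"]
  ultimately obtain b where "\<forall>i. b i \<in> A"
    and "(\<lambda>i. norm (z (r i) - b i) / norm (z (r i))) \<longlonglongrightarrow> 0"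
    unfolding comp_def by blast
  then show "a \<in> dirset (h ` (A \<inter> U))"
    using z(1) LIMSEQ_subseq_LIMSEQ[OF z(2) r] LIMSEQ_subseq_LIMSEQ[OF z(3) r]
      LIMSEQ_subseq_LIMSEQ[OF z(4) r] norm_dirset[OF \<open>a \<in> dirset _\<close>]
    by (intro dirset_imageI[where x = "z \<circ> r" and w = b]) (auto simp: comp_def)
qed

end

theorem lemma5p6:
  fixes A U :: "'a::euclidean_space set" and h :: "'a \<Rightarrow> 'a"
  assumes "0 \<in> closure A"
    and "bilip_homeo_germ U h"
  shows "dirset (h ` (A \<inter> U)) \<subseteq> dirset (h ` (LD A \<inter> U)) \<and>
         (SSP A \<longrightarrow> dirset (h ` (A \<inter> U)) = dirset (h ` (LD A \<inter> U)))"
proof -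
  obtain K1 K2 where "bilipschitz_germ U h K1 K2"
    using assms(2) unfolding bilip_homeo_germ_def bilipschitz_germ_def by blast
  then interpret bilipschitz_germ U h K1 K2 .
  show ?thesis
    using dirset_image_subset_image_LD dirset_image_LD_subset_image by blast
qed

end
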